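(* Let $I=\bigcup_{n\in\mathbb N}I_n$ be a partition of a countable set $I$ into nonempty finite pieces and let $\mathcal F$ be a $T$-family on $I$ with respect to this partition. Then for every $0<\lambda<1$ and every finitely supported sequence of scalars $(a_n)_n$, $$\lambda\Big\|\sum_n a_nu_n\Big\|_{\mathcal G_\lambda(\mathcal F)}\le\max\Big\{\Big\|\sum_n a_n\Big(\frac1{\#I_n}\sum_{j\in I_n}u_j\Big)\Big\|_{\mathcal F},\ \sup_n|a_n|\Big\}\le\Big\|\sum_na_nu_n\Big\|_{\mathcal G_+(\mathcal F)},$$ where on the left and right $(u_n)_{n\in\mathbb N}$ is the unit basis of $c_{00}(\mathbb N)$ and in the middle $(u_j)_{j\in I}$ is the unit basis of $c_{00}(I)$.
   Context: A family on a set $J$ is a collection of finite subsets of $J$. For a family $\mathcal H$ on $J$, $\|x\|_{\mathcal H}=\max\{\|x\|_\infty,\sup_{s\in\mathcal H}\sum_{j\in s}|(x)_j|\}$ for $x\in c_{00}(J)$. A family $\mathcal H$ is $n$-large in $J$ if for every infinite $K\subseteq J$ there is $s\in\mathcal H$ with $\#(s\cap K)\ge n$, and large in $J$ if it is $n$-large for every $n$; it is pre-compact if every set in its closure in $2^J$ (product topology) is finite. For $s\subseteq I$ finite and $0<\lambda<1$: $s[\lambda]=\{n: \#(s\cap I_n)\ge\lambda\#I_n\}$, $s[+]=\{n: s\cap I_n\neq\emptyset\}$, $\mathcal G_\lambda(\mathcal F)=\{s[\lambda]:s\in\mathcal F\}$, $\mathcal G_+(\mathcal F)=\{s[+]:s\in\mathcal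 F\}$ (families on $\mathbb N$). A pre-compact family $\mathcal F$ on $I$ is a $T$-family (w.r.t. $(I_n)_n$) if $\mathcal F$ is not large in any infinite $J\subseteq I$ and there is $0<\lambda\le1$ such that $\mathcal G_\lambda(\mathcal F)$ is large in $\mathbb N$. *)

theory Defs
  imports Complex_Main "HOL-Library.Countable_Set"
begin

definition family_on :: "'a set \<Rightarrow> 'a set set \<Rightarrow> bool" where
  "family_on J H \<longleftrightarrow> (\<forall>s\<in>H. finite s \<and> s \<subseteq> J)"

text \<open>The norm of x in c00(J) (x a real function on J with finite support, zero off J):
  max of the sup norm and the sup over s in H of the l1 norm of x restricted to s.\<close>
definition fam_norm :: "'a set \<Rightarrow> 'a set set \<Rightarrow> ('a \<Rightarrow> real) \<Rightarrow> real" where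
  "fam_norm J H x = Sup ({\<bar>x j\<bar> | j. j \<in> J} \<union> {(\<Sum>j\<in>s. \<bar>x j\<bar>) | s. s \<in> H})"

definition n_large :: "nat \<Rightarrow> 'a set \<Rightarrow> 'a set set \<Rightarrow> bool" where
  "n_large n J H \<longleftrightarrow> (\<forall>K. K \<subseteq> J \<and> infinite K \<longrightarrow> (\<exists>s\<in>H. card (s \<inter> K) \<ge> n))"

definition large :: "'a set \<Rightarrow> 'a set set \<Rightarrow> bool" where
  "large J H \<longleftrightarrow> (\<forall>n. n_large n J H)"

text \<open>Closure of H in 2^J with the product topology: A is in the closure iff every basic
  neighbourhood of A (sets agreeing with A on a finite G) meets H.\<close>
definition fam_closure :: "'a set \<Rightarrow> 'a set set \<Rightarrow> 'a set set" where
  "fam_closure J H = {A. A \<subseteq> J \<and> (\<forall>G. finite G \<and> G \<subseteq> J \<longrightarrow> (\<exists>s\<in>H. s \<inter> G = A \<inter> G))}"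

definition precompact :: "'a set \<Rightarrow> 'a set set \<Rightarrow> bool" where
  "precompact J H \<longleftrightarrow> (\<forall>A\<in>fam_closure J H. finite A)"

definition lam_set :: "(nat \<Rightarrow> 'a set) \<Rightarrow> real \<Rightarrow> 'a set \<Rightarrow> nat set" where
  "lam_set Ip lam s = {n. real (card (s \<inter> Ip n)) \<ge> lam * real (card (Ip n))}"

definition plus_set :: "(nat \<Rightarrow> 'a set) \<Rightarrow> 'a set \<Rightarrow> nat set" where
  "plus_set Ip s = {n. s \<inter> Ip n \<noteq> {}}"

definition G_lam :: "(nat \<Rightarrow> 'a set) \<Rightarrow> real \<Rightarrow> 'a set set \<Rightarrow> nat set set" where
  "G_lam Ip lam F = lam_set Ip lam ` F"

definition G_plus :: "(nat \<Rightarrow> 'a set) \<Rightarrow> 'a set set \<Rightarrow> nat set set" where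
  "G_plus Ip F = plus_set Ip ` F"

definition T_family :: "'a set \<Rightarrow> (nat \<Rightarrow> 'a set) \<Rightarrow> 'a set set \<Rightarrow> bool" where
  "T_family I Ip F \<longleftrightarrow> family_on I F \<and> precompact I F \<and>
     (\<forall>J. J \<subseteq> I \<and> infinite J \<longrightarrow> \<not> large J F) \<and>
     (\<exists>lam. 0 < lam \<and> lam \<le> 1 \<and> large (UNIV :: nat set) (G_lam Ip lam F))"

end

theory Submission
  imports Defs
begin

text \<open>
  Write \<open>v\<close> for the vector of block averages, so \<open>v j = a\<^sub>n / #I\<^sub>n\<close> for
  \<open>j \<in> I\<^sub>n\<close>. For a finite \<open>s \<subseteq> I\<close> the \<open>\<ell>\<^sub>1\<close>-mass of \<open>v\<close> on \<open>s\<close> is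
  \<open>\<Sum>\<^sub>n |a\<^sub>n| \<cdot> #(s \<inter> I\<^sub>n) / #I\<^sub>n\<close>, a weighted sum of the \<open>|a\<^sub>n|\<close> with weights in \<open>[0,1]\<close>.
  The weights are at least \<open>\<lambda>\<close> on \<open>s[\<lambda>]\<close> and vanish off \<open>s[+]\<close>, which gives the
  two inequalities for the summing parts of the norms; the sup-norm parts are
  compared through \<open>|v j| \<le> |a\<^sub>n|\<close>.
\<close>

lemma sum_abs_le_sum_abs_support:
  fixes x :: "'a \<Rightarrow> 'b::ordered_ab_group_add_abs"
  assumes "finite {j. x j \<noteq> 0}"
  shows "(\<Sum>j\<in>s. \<bar>x j\<bar>) \<le> (\<Sum>j\<in>{j. x j \<noteq> 0}. \<bar>x j\<bar>)"
proof (cases "finite s")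
  case True
  then have "(\<Sum>j\<in>s. \<bar>x j\<bar>) = (\<Sum>j\<in>s \<inter> {j. x j \<noteq> 0}. \<bar>x j\<bar>)"
    by (intro sum.mono_neutral_right) auto
  also have "\<dots> \<le> (\<Sum>j\<in>{j. x j \<noteq> 0}. \<bar>x j\<bar>)"
    using assms by (intro sum_mono2) auto
  finally show ?thesis .
qed (simp add: sum_nonneg)

lemma bdd_above_fam_norm_values:
  fixes x :: "'a \<Rightarrow> real"
  assumes "finite {j. x j \<noteq> 0}"
  shows "bdd_above ({\<bar>x j\<bar> | j. j \<in> J} \<union> {(\<Sum>j\<in>s. \<bar>x j\<bar>) | s. s \<in> H})"
proof -
  let ?T = "\<Sum>j\<in>{j. x j \<noteq> 0}. \<bar>x j\<bar>"
  have "\<bar>x j\<bar> \<le> ?T" for j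
    using sum_abs_le_sum_abs_support[OF assms, of "{j}"] by simp
  then show ?thesis
    using sum_abs_le_sum_abs_support[OF assms] unfolding bdd_above_def by blast
qed

lemma abs_le_fam_norm:
  fixes x :: "'a \<Rightarrow> real"
  assumes "finite {j. x j \<noteq> 0}" and "j \<in> J"
  shows "\<bar>x j\<bar> \<le> fam_norm J H x"
  unfolding fam_norm_def using assms bdd_above_fam_norm_values[OF assms(1)]
  by (intro cSup_upper) auto

lemma sum_abs_le_fam_norm:
  fixes x :: "'a \<Rightarrow> real"
  assumes "finite {j. x j \<noteq> 0}" and "s \<in> H"
  shows "(\<Sum>j\<in>s. \<bar>x j\<bar>) \<le> fam_norm J H x"
  unfolding fam_norm_def using assms bdd_above_fam_norm_values[OF assms(1)]
  by (intro cSup_upper) auto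

lemma fam_norm_le:
  assumes "J \<noteq> {}"
    and "\<And>j. j \<in> J \<Longrightarrow> \<bar>x j\<bar> \<le> c"
    and "\<And>s. s \<in> H \<Longrightarrow> (\<Sum>j\<in>s. \<bar>x j\<bar>) \<le> c"
  shows "fam_norm J H x \<le> c"
  unfolding fam_norm_def using assms by (intro cSup_least) auto

lemma abs_le_Sup_range_abs:
  fixes a :: "nat \<Rightarrow> real"
  assumes "finite {n. a n \<noteq> 0}"
  shows "\<bar>a n\<bar> \<le> Sup (range (\<lambda>n. \<bar>a n\<bar>))"
proof (rule cSup_upper)
  show "bdd_above (range (\<lambda>n. \<bar>a n\<bar>))"
    using sum_abs_le_sum_abs_support[OF assms, of "{_}"] by (auto simp: bdd_above_def)
qed simp

definition block_average :: "(nat \<Rightarrow> 'a set) \<Rightarrow> (nat \<Rightarrow> real) \<Rightarrow> 'a \<Rightarrow> real" where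
  "block_average Ip a = (\<lambda>j. \<Sum>n\<in>{n. a n \<noteq> 0}.
     a n * ((1 / real (card (Ip n))) * (if j \<in> Ip n then 1 else 0)))"

lemma finite_support_block_average:
  assumes "finite {n. a n \<noteq> 0}" and "\<And>n. finite (Ip n)"
  shows "finite {j. block_average Ip a j \<noteq> 0}"
proof (rule finite_subset)
  show "{j. block_average Ip a j \<noteq> 0} \<subseteq> (\<Union>n\<in>{n. a n \<noteq> 0}. Ip n)"
  proof
    fix j assume "j \<in> {j. block_average Ip a j \<noteq> 0}"
    then obtain n where "n \<in> {n. a n \<noteq> 0}"
      and "a n * ((1 / real (card (Ip n))) * (if j \<in> Ip n then 1 else 0)) \<noteq> 0"
      unfolding block_average_def by (auto elim: sum.not_neutral_contains_not_neutral)
    then show "j \<in> (\<Union>n\<in>{n. a n \<noteq> 0}. Ip n)"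
      by (auto split: if_splits)
  qed
  show "finite (\<Union>n\<in>{n. a n \<noteq> 0}. Ip n)"
    using assms by blast
qed

locale finite_partition =
  fixes Ip :: "nat \<Rightarrow> 'a set"
  assumes finite_piece: "finite (Ip n)"
    and piece_nonempty: "Ip n \<noteq> {}"
    and pieces_disjoint: "m \<noteq> n \<Longrightarrow> Ip m \<inter> Ip n = {}"
begin

lemma card_piece_pos: "0 < card (Ip n)"
  using finite_piece piece_nonempty by (simp add: card_gt_0_iff)

lemma piece_fraction_le_one: "real (card (s \<inter> Ip n)) / card (Ip n) \<le> 1"
  using card_mono[OF finite_piece Int_lower2, of s n] card_piece_pos[of n] by simp

lemma piece_unique: "j \<in> Ip m \<Longrightarrow> j \<in> Ip n \<Longrightarrow> m = n"
  using pieces_disjoint by blast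

lemma finite_plus_set:
  assumes "finite s"
  shows "finite (plus_set Ip s)"
proof (rule finite_subset)
  show "plus_set Ip s \<subseteq> (\<Union>j\<in>s. {n. j \<in> Ip n})"
    unfolding plus_set_def by auto
  have "{n. j \<in> Ip n} \<subseteq> {m}" if "j \<in> Ip m" for j m
    using piece_unique that by blast
  then have "finite {n. j \<in> Ip n}" for j
    by (cases "\<exists>m. j \<in> Ip m") (auto intro: finite_subset)
  then show "finite (\<Union>j\<in>s. {n. j \<in> Ip n})"
    using assms by blast
qed

lemma block_average_in_piece:
  assumes "finite {n. a n \<noteq> 0}" and "j \<in> Ip m"
  shows "block_average Ip a j = a m / card (Ip m)"
proof -
  have "block_average Ip a j = (\<Sum>n\<in>{n. a n \<noteq> 0}. if n = m then a m / card (Ip m) else 0)"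
    unfolding block_average_def using assms(2) piece_unique
    by (intro sum.cong) auto
  then show ?thesis
    using assms(1) by (simp add: sum.delta')
qed

lemma abs_block_average_le:
  assumes "finite {n. a n \<noteq> 0}" and "j \<in> Ip m"
  shows "\<bar>block_average Ip a j\<bar> \<le> \<bar>a m\<bar>"
proof -
  have "1 \<le> real (card (Ip m))"
    using card_piece_pos[of m] by linarith
  then show ?thesis
    using block_average_in_piece[OF assms] by (simp add: divide_le_eq mult_le_cancel_left1)
qed

lemma sum_abs_block_average:
  assumes "finite {n. a n \<noteq> 0}" and "finite s" and "s \<subseteq> (\<Union>n. Ip n)"
  shows "(\<Sum>j\<in>s. \<bar>block_average Ip a j\<bar>)
    = (\<Sum>n\<in>{n. a n \<noteq> 0}. \<bar>a n\<bar> * (card (s \<inter> Ip n) / card (Ip n)))"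
proof -
  have "(\<Sum>j\<in>s. \<bar>block_average Ip a j\<bar>)
      = (\<Sum>j\<in>s. \<Sum>n\<in>{n. a n \<noteq> 0}. \<bar>a n\<bar> / card (Ip n) * (if j \<in> Ip n then 1 else 0))"
  proof (rule sum.cong)
    fix j assume "j \<in> s"
    then obtain m where "j \<in> Ip m"
      using assms(3) by auto
    then have "(\<Sum>n\<in>{n. a n \<noteq> 0}. \<bar>a n\<bar> / card (Ip n) * (if j \<in> Ip n then 1 else 0))
        = (\<Sum>n\<in>{n. a n \<noteq> 0}. if n = m then \<bar>a m\<bar> / card (Ip m) else 0)"
      using piece_unique by (intro sum.cong) auto
    then show "\<bar>block_average Ip a j\<bar>
        = (\<Sum>n\<in>{n. a n \<noteq> 0}. \<bar>a n\<bar> / card (Ip n) * (if j \<in> Ip n then 1 else 0))"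
      using block_average_in_piece[OF assms(1) \<open>j \<in> Ip m\<close>] assms(1)
      by (simp add: sum.delta')
  qed simp
  also have "\<dots> = (\<Sum>n\<in>{n. a n \<noteq> 0}. \<bar>a n\<bar> / card (Ip n) * (\<Sum>j\<in>s. if j \<in> Ip n then 1 else 0))"
    by (subst sum.swap) (simp add: sum_distrib_left)
  also have "\<dots> = (\<Sum>n\<in>{n. a n \<noteq> 0}. \<bar>a n\<bar> * (card (s \<inter> Ip n) / card (Ip n)))"
    using assms(2) by (simp add: sum.If_cases Int_def)
  finally show ?thesis .
qed

lemma lam_sum_le_sum_abs_block_average:
  assumes "finite {n. a n \<noteq> 0}" and "finite s" and "s \<subseteq> (\<Union>n. Ip n)" and "0 \<le> lam"
  shows "lam * (\<Sum>n\<in>lam_set Ip lam s. \<bar>a n\<bar>) \<le> (\<Sum>j\<in>s. \<bar>block_average Ip a j\<bar>)"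
proof (cases "finite (lam_set Ip lam s)")
  case True
  let ?S = "{n. a n \<noteq> 0}" and ?w = "\<lambda>n. card (s \<inter> Ip n) / card (Ip n) :: real"
  have "lam * (\<Sum>n\<in>lam_set Ip lam s. \<bar>a n\<bar>) = (\<Sum>n\<in>lam_set Ip lam s \<inter> ?S. lam * \<bar>a n\<bar>)"
    using True by (subst sum.mono_neutral_right) (auto simp: sum_distrib_left)
  also have "\<dots> \<le> (\<Sum>n\<in>lam_set Ip lam s \<inter> ?S. \<bar>a n\<bar> * ?w n)"
  proof (rule sum_mono)
    fix n assume "n \<in> lam_set Ip lam s \<inter> ?S"
    then have "lam \<le> ?w n"
      using card_piece_pos[of n] by (simp add: lam_set_def le_divide_eq)
    then show "lam * \<bar>a n\<bar> \<le> \<bar>a n\<bar> * ?w n"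
      by (metis abs_ge_zero mult.commute mult_right_mono)
  qed
  also have "\<dots> \<le> (\<Sum>n\<in>?S. \<bar>a n\<bar> * ?w n)"
    using assms(1) by (intro sum_mono2) auto
  also have "\<dots> = (\<Sum>j\<in>s. \<bar>block_average Ip a j\<bar>)"
    using sum_abs_block_average[OF assms(1-3)] by simp
  finally show ?thesis .
qed (simp add: sum_nonneg)

lemma sum_abs_block_average_le_plus_set:
  assumes "finite {n. a n \<noteq> 0}" and "finite s" and "s \<subseteq> (\<Union>n. Ip n)"
  shows "(\<Sum>j\<in>s. \<bar>block_average Ip a j\<bar>) \<le> (\<Sum>n\<in>plus_set Ip s. \<bar>a n\<bar>)"
proof -
  let ?S = "{n. a n \<noteq> 0}" and ?w = "\<lambda>n. card (s \<inter> Ip n) / card (Ip n) :: real"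
  have "(\<Sum>j\<in>s. \<bar>block_average Ip a j\<bar>) = (\<Sum>n\<in>?S \<inter> plus_set Ip s. \<bar>a n\<bar> * ?w n)"
    unfolding sum_abs_block_average[OF assms]
    using assms(1) by (intro sum.mono_neutral_right) (auto simp: plus_set_def)
  also have "\<dots> \<le> (\<Sum>n\<in>?S \<inter> plus_set Ip s. \<bar>a n\<bar>)"
    by (intro sum_mono mult_left_le piece_fraction_le_one) simp
  also have "\<dots> \<le> (\<Sum>n\<in>plus_set Ip s. \<bar>a n\<bar>)"
    using finite_plus_set[OF assms(2)] by (intro sum_mono2) auto
  finally show ?thesis .
qed

lemma lam_fam_norm_G_lam_le:
  assumes "family_on (\<Union>n. Ip n) F" and "finite {n. a n \<noteq> 0}" and "0 < lam" and "lam \<le> 1"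
  shows "lam * fam_norm UNIV (G_lam Ip lam F) a
    \<le> max (fam_norm (\<Union>n. Ip n) F (block_average Ip a)) (Sup (range (\<lambda>n. \<bar>a n\<bar>)))"
    (is "_ \<le> ?c")
proof -
  have fin_avg: "finite {j. block_average Ip a j \<noteq> 0}"
    using finite_support_block_average assms(2) finite_piece by blast
  have "fam_norm UNIV (G_lam Ip lam F) a \<le> ?c / lam"
  proof (rule fam_norm_le)
    fix n :: nat
    have "lam * \<bar>a n\<bar> \<le> \<bar>a n\<bar>"
      using assms(3,4) by (intro mult_left_le_one_le) auto
    then show "\<bar>a n\<bar> \<le> ?c / lam"
      using abs_le_Sup_range_abs[OF assms(2), of n] assms(3)
      by (simp add: le_divide_eq mult.commute max.coboundedI2)
  next
    fix t assume "t \<in> G_lam Ip lam F"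
    then obtain s where "s \<in> F" and t: "t = lam_set Ip lam s"
      unfolding G_lam_def by blast
    then have "finite s" "s \<subseteq> (\<Union>n. Ip n)"
      using assms(1) by (auto simp: family_on_def)
    then have "lam * (\<Sum>n\<in>t. \<bar>a n\<bar>) \<le> fam_norm (\<Union>n. Ip n) F (block_average Ip a)"
      unfolding t using lam_sum_le_sum_abs_block_average[OF assms(2)] assms(3)
        sum_abs_le_fam_norm[OF fin_avg \<open>s \<in> F\<close>] by (meson less_imp_le order_trans)
    then show "(\<Sum>n\<in>t. \<bar>a n\<bar>) \<le> ?c / lam"
      using assms(3) by (simp add: le_divide_eq mult.commute)
  qed simp
  then show ?thesis
    using assms(3) by (simp add: le_divide_eq mult.commute)
qed

lemma fam_norm_block_average_le:
  assumes "family_on (\<Union>n. Ip n) F" and "finite {n. a n \<noteq> 0}"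
  shows "fam_norm (\<Union>n. Ip n) F (block_average Ip a) \<le> fam_norm UNIV (G_plus Ip F) a"
proof (rule fam_norm_le)
  show "(\<Union>n. Ip n) \<noteq> {}"
    using piece_nonempty by blast
next
  fix j assume "j \<in> (\<Union>n. Ip n)"
  then obtain m where "j \<in> Ip m" by blast
  then show "\<bar>block_average Ip a j\<bar> \<le> fam_norm UNIV (G_plus Ip F) a"
    using abs_block_average_le[OF assms(2)] abs_le_fam_norm[OF assms(2)] order_trans by blast
next
  fix s assume "s \<in> F"
  then have "finite s" "s \<subseteq> (\<Union>n. Ip n)"
    using assms(1) by (auto simp: family_on_def)
  moreover have "(\<Sum>n\<in>plus_set Ip s. \<bar>a n\<bar>) \<le> fam_norm UNIV (G_plus Ip F) a"
    using \<open>s \<in> F\<close> by (intro sum_abs_le_fam_norm[OF assms(2)]) (simp add: G_plus_def)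
  ultimately show "(\<Sum>j\<in>s. \<bar>block_average Ip a j\<bar>) \<le> fam_norm UNIV (G_plus Ip F) a"
    using sum_abs_block_average_le_plus_set[OF assms(2)] order_trans by blast
qed

end

lemma Sup_range_abs_le_fam_norm:
  assumes "finite {n. a n \<noteq> 0}"
  shows "Sup (range (\<lambda>n. \<bar>a n\<bar>)) \<le> fam_norm UNIV H a"
  using abs_le_fam_norm[OF assms] by (intro cSup_least) auto

theorem proposition4p3:
  fixes I :: "'a set" and Ip :: "nat \<Rightarrow> 'a set" and F :: "'a set set"
    and lam :: real and a :: "nat \<Rightarrow> real"
  assumes "countable I"
    and "I = (\<Union>n. Ip n)"
    and "\<And>n. finite (Ip n)" and "\<And>n. Ip n \<noteq> {}"
    and "\<And>m n. m \<noteq> n \<Longrightarrow> Ip m \<inter> Ip n = {}"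
    and "T_family I Ip F"
    and "0 < lam" and "lam < 1"
    and "finite {n. a n \<noteq> 0}"
  shows "lam * fam_norm UNIV (G_lam Ip lam F) a
           \<le> max (fam_norm I F (\<lambda>j. \<Sum>n\<in>{n. a n \<noteq> 0}.
                      a n * ((1 / real (card (Ip n))) * (if j \<in> Ip n then 1 else 0))))
                 (Sup (range (\<lambda>n. \<bar>a n\<bar>)))
         \<and> max (fam_norm I F (\<lambda>j. \<Sum>n\<in>{n. a n \<noteq> 0}.
                      a n * ((1 / real (card (Ip n))) * (if j \<in> Ip n then 1 else 0))))
                 (Sup (range (\<lambda>n. \<bar>a n\<bar>)))
           \<le> fam_norm UNIV (G_plus Ip F) a"
proof -
  interpret finite_partition Ip
    using assms(3-5) by unfold_locales
  have F: "family_on (\<Union>n. Ip n) F"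
    using assms(2,6) by (simp add: T_family_def)
  show ?thesis
    unfolding block_average_def[symmetric] assms(2)
    using lam_fam_norm_G_lam_le[OF F assms(9,7)] assms(8)
      fam_norm_block_average_le[OF F assms(9)] Sup_range_abs_le_fam_norm[OF assms(9)]
    by simp
qed

end
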